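(* For any parsimonious protocol $\Pi$ on $M=\{1,\dots,m\}$, \[\mu_m^H(\Pi)\,\mu_1^L(\Pi)\le\gamma^{m-2}\,\mu_1^H(\Pi)\,\mu_m^L(\Pi).\] Furthermore, if $m\ge4$ and $\mu_i^\theta(\Pi)\neq0$ for all $i\in\{1,m\}$ and $\theta\in\{H,L\}$, the inequality is strict.
   Context: Setting. The state of nature is $\theta\in\{H,L\}$. $S$ is a finite signal set; conditional on $\theta$, signals are i.i.d. with distribution $\pi_\theta$ on $S$, where $\pi_\theta(s)>0$ for all $s,\theta$, and $\pi_H\neq\pi_L$. A receiver protocol on memory states $M=\{1,\dots,m\}$ is $\Pi=(f,g,a)$ with transition function $f:M\times S\to\Delta(M)$ ($f(i,s)(j)$ the probability of moving from $i$ to $j$ after signal $s$), initial distribution $g\in\Delta(M)$ and action rule $a:M\to[0,1]$ (probability of action $H$). Absorbing/transient refer to the Markov chain on $M$ induced by $f$ with signals drawn i.i.d. from $\pi_\theta$ (by full support this classification does not depend on $\theta$). A protocol is parsimonious if (i) it has exactly two absorbing memory states, one with $a=0$ and one with $a=1$, and (ii) all other memory states are transient with $a=0$. For a parsimonious protocol, label the absorbing state with $a=0$ as $1$ and the one with $a=1$ as $m$, and let $\mu_1^\theta(\Pi),\mu_m^\theta(\Pi)$ be the probabilities that this Markov chain, started from $m_0\sim g$ with signals drawn from $\pi_\theta$, is absorbed in $1$ and in $m$ respectively (the sender never stops; $\mu_1^\theta+\mu_m^\theta=1$). $\bar\ell=\max_{s}\pi_H(s)/\pi_L(s)$, $\underline\ell=\min_{s}\pi_H(s)/\pi_L(s)$,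 $\gamma=\bar\ell/\underline\ell\in(1,\infty)$. *)

theory Defs
  imports "HOL-Analysis.Analysis"
begin

text \<open>Memory states are the naturals 1..m. A transition function is
  f :: nat => 's => nat => real, with f i s j the probability of moving from i to j
  after signal s.\<close>

definition is_signal_dist :: "('s::finite \<Rightarrow> real) \<Rightarrow> bool" where
  "is_signal_dist p \<longleftrightarrow> (\<forall>s. p s > 0) \<and> (\<Sum>s\<in>UNIV. p s) = 1"

definition valid_protocol ::
  "nat \<Rightarrow> (nat \<Rightarrow> 's \<Rightarrow> nat \<Rightarrow> real) \<Rightarrow> (nat \<Rightarrow> real) \<Rightarrow> (nat \<Rightarrow> real) \<Rightarrow> bool" where
  "valid_protocol m f g a \<longleftrightarrow>
     (\<forall>i\<in>{1..m}. \<forall>s. (\<forall>j\<in>{1..m}. f i s j \<ge> 0) \<and> (\<Sum>j\<in>{1..m}. f i s j) = 1) \<and>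
     (\<forall>i\<in>{1..m}. g i \<ge> 0) \<and> (\<Sum>i\<in>{1..m}. g i) = 1 \<and>
     (\<forall>i\<in>{1..m}. 0 \<le> a i \<and> a i \<le> 1)"

definition kernel :: "('s::finite \<Rightarrow> real) \<Rightarrow> (nat \<Rightarrow> 's \<Rightarrow> nat \<Rightarrow> real) \<Rightarrow> nat \<Rightarrow> nat \<Rightarrow> real" where
  "kernel p f i j = (\<Sum>s\<in>UNIV. p s * f i s j)"

definition edge :: "nat \<Rightarrow> ('s::finite \<Rightarrow> real) \<Rightarrow> (nat \<Rightarrow> 's \<Rightarrow> nat \<Rightarrow> real) \<Rightarrow> nat \<Rightarrow> nat \<Rightarrow> bool" where
  "edge m p f i j \<longleftrightarrow> i \<in> {1..m} \<and> j \<in> {1..m} \<and> kernel p f i j > 0"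

definition absorbing :: "nat \<Rightarrow> ('s::finite \<Rightarrow> real) \<Rightarrow> (nat \<Rightarrow> 's \<Rightarrow> nat \<Rightarrow> real) \<Rightarrow> nat \<Rightarrow> bool" where
  "absorbing m p f i \<longleftrightarrow> i \<in> {1..m} \<and> kernel p f i i = 1"

definition transient :: "nat \<Rightarrow> ('s::finite \<Rightarrow> real) \<Rightarrow> (nat \<Rightarrow> 's \<Rightarrow> nat \<Rightarrow> real) \<Rightarrow> nat \<Rightarrow> bool" where
  "transient m p f i \<longleftrightarrow> i \<in> {1..m} \<and>
     (\<exists>j. (edge m p f)\<^sup>*\<^sup>* i j \<and> \<not> (edge m p f)\<^sup>*\<^sup>* j i)"

definition parsimonious ::
  "nat \<Rightarrow> ('s::finite \<Rightarrow> real) \<Rightarrow> (nat \<Rightarrow> 's \<Rightarrow> nat \<Rightarrow> real) \<Rightarrow> (nat \<Rightarrow> real) \<Rightarrow> bool" where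
  "parsimonious m p f a \<longleftrightarrow>
     (\<exists>i0 i1. i0 \<noteq> i1 \<and> {i\<in>{1..m}. absorbing m p f i} = {i0, i1} \<and> a i0 = 0 \<and> a i1 = 1) \<and>
     (\<forall>i\<in>{1..m}. \<not> absorbing m p f i \<longrightarrow> transient m p f i \<and> a i = 0)"

fun state_dist :: "nat \<Rightarrow> ('s::finite \<Rightarrow> real) \<Rightarrow> (nat \<Rightarrow> 's \<Rightarrow> nat \<Rightarrow> real) \<Rightarrow> (nat \<Rightarrow> real) \<Rightarrow> nat \<Rightarrow> nat \<Rightarrow> real" where
  "state_dist m p f g 0 j = g j"
| "state_dist m p f g (Suc n) j = (\<Sum>i\<in>{1..m}. state_dist m p f g n i * kernel p f i j)"

definition absorb_prob :: "nat \<Rightarrow> ('s::finite \<Rightarrow> real) \<Rightarrow> (nat \<Rightarrow> 's \<Rightarrow> nat \<Rightarrow> real) \<Rightarrow> (nat \<Rightarrow> real) \<Rightarrow> nat \<Rightarrow> real" where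
  "absorb_prob m p f g j = lim (\<lambda>n. state_dist m p f g n j)"

definition gamma :: "('s::finite \<Rightarrow> real) \<Rightarrow> ('s \<Rightarrow> real) \<Rightarrow> real" where
  "gamma pH pL = Max (range (\<lambda>s. pH s / pL s)) / Min (range (\<lambda>s. pH s / pL s))"

end

(*
  Restart the memory chain from g whenever it is absorbed. Weighting each transient state by
  its expected number of visits and each absorbing state by its absorption probability gives
  an invariant measure of the restarted chain, so across every cut of the state space the
  flow out equals the flow in. Under H and under L the restart rows coincide, while the
  transient rows differ by a factor between lo = min piH/piL and hi = max piH/piL.
  Let rho be the ratio of the H-weight to the L-weight of a state. Comparing the two balance
  equations across the cut {i. c < rho i} shows that the next level of rho above c lies
  below gamma * c, where gamma = hi / lo.
  Climbing from rho 1 to rho m passes at most m - 2 transient levels; the first and the last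
  step cost only 1/lo and hi, and every other step costs strictly less than gamma, which
  gives rho m <= gamma^(m-2) * rho 1, strictly for m >= 4.
*)
theory Submission
  imports Defs
begin

section \<open>Flows across a cut\<close>

definition cut_flow :: "('a \<Rightarrow> 'b::comm_ring_1) \<Rightarrow> ('a \<Rightarrow> 'a \<Rightarrow> 'b) \<Rightarrow> 'a set \<Rightarrow> 'a set \<Rightarrow> 'b" where
  "cut_flow w R S U = (\<Sum>i\<in>S. \<Sum>j\<in>U. w i * R i j)"

lemma invariant_cut_balance:
  assumes "finite A" and "S \<subseteq> A"
    and rows: "\<And>i. i \<in> A \<Longrightarrow> (\<Sum>j\<in>A. R i j) = 1"
    and invariant: "\<And>j. j \<in> A \<Longrightarrow> (\<Sum>i\<in>A. w i * R i j) = w j"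
  shows "cut_flow w R S (A - S) = cut_flow w R (A - S) S"
proof -
  have "(\<Sum>j\<in>S. w j) = (\<Sum>i\<in>A. \<Sum>j\<in>S. w i * R i j)"
    using invariant assms(2) by (subst sum.swap) (auto intro!: sum.cong)
  also have "\<dots> = cut_flow w R S S + cut_flow w R (A - S) S"
    unfolding cut_flow_def using assms(1,2) by (simp add: sum.subset_diff add.commute)
  finally have in_S: "(\<Sum>j\<in>S. w j) = cut_flow w R S S + cut_flow w R (A - S) S" .
  have "(\<Sum>i\<in>S. w i) = (\<Sum>i\<in>S. \<Sum>j\<in>A. w i * R i j)"
    using rows assms(2) by (auto simp: sum_distrib_left[symmetric] intro!: sum.cong)
  also have "\<dots> = cut_flow w R S S + cut_flow w R S (A - S)"
    unfolding cut_flow_def using assms(1,2)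
    by (simp add: sum.subset_diff[of S A] sum.distrib add.commute)
  finally show ?thesis using in_S by simp
qed

lemma cut_flow_scaled_le:
  assumes "\<And>i j. i \<in> S \<Longrightarrow> j \<in> U \<Longrightarrow> c * (w i * R i j) \<le> w' i * R' i j"
  shows "c * cut_flow w R S U \<le> (cut_flow w' R' S U :: real)"
  unfolding cut_flow_def sum_distrib_left using assms by (intro sum_mono) auto

lemma cut_flow_remove:
  "finite S \<Longrightarrow> a \<in> S \<Longrightarrow> cut_flow w R S U = (\<Sum>j\<in>U. w a * R a j) + cut_flow w R (S - {a}) U"
  unfolding cut_flow_def by (rule sum.remove)

lemma sum_pos_iff_ex_pos:
  fixes h :: "'a \<Rightarrow> 'b::linordered_ab_group_add"
  assumes "finite A" and "\<And>x. x \<in> A \<Longrightarrow> 0 \<le> h x"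
  shows "0 < sum h A \<longleftrightarrow> (\<exists>x\<in>A. 0 < h x)"
  using sum_nonneg_eq_0_iff[OF assms] sum_nonneg[of A h] assms(2) by (auto simp: order_less_le)

lemma reaches_absorbing:
  fixes E :: "'a \<Rightarrow> 'a \<Rightarrow> bool"
  assumes "finite V" and closed: "\<And>x y. E x y \<Longrightarrow> y \<in> V"
    and transient: "\<And>x. x \<in> V \<Longrightarrow> \<not> A x \<Longrightarrow> \<exists>y. E\<^sup>*\<^sup>* x y \<and> \<not> E\<^sup>*\<^sup>* y x"
    and "x \<in> V"
  shows "\<exists>a. A a \<and> E\<^sup>*\<^sup>* x a"
proof -
  define reach where "reach x = {y. E\<^sup>*\<^sup>* x y}" for x
  have reach_V: "reach x \<subseteq> V" if "x \<in> V" for x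
    unfolding reach_def using that by (auto elim: rtranclp_induct intro: closed)
  obtain y where xy: "E\<^sup>*\<^sup>* x y" and least: "\<And>z. E\<^sup>*\<^sup>* x z \<Longrightarrow> card (reach y) \<le> card (reach z)"
    using ex_has_least_nat[of "E\<^sup>*\<^sup>* x" x "\<lambda>y. card (reach y)"] by auto
  have "y \<in> V" using reach_V[OF \<open>x \<in> V\<close>] xy by (auto simp: reach_def)
  show ?thesis
  proof (rule ccontr)
    assume "\<not> ?thesis"
    with xy transient[OF \<open>y \<in> V\<close>] obtain z where yz: "E\<^sup>*\<^sup>* y z" and "\<not> E\<^sup>*\<^sup>* z y" by blast
    hence "reach z \<subset> reach y" unfolding reach_def by (auto intro: rtranclp_trans)
    hence "card (reach z) < card (reach y)"
      using reach_V[OF \<open>y \<in> V\<close>] \<open>finite V\<close> by (meson psubset_card_mono rev_finite_subset)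
    with least[OF rtranclp_trans[OF xy yz]] show False by simp
  qed
qed

section \<open>Likelihood ratios and transition kernels\<close>

lemma signal_dist_crosses:
  assumes "is_signal_dist p" and "is_signal_dist q" and "p \<noteq> q"
  shows "\<exists>s. p s < q s"
proof (rule ccontr)
  assume "\<not> ?thesis"
  hence le: "\<And>s. q s \<le> p s" by (simp add: not_less)
  obtain s where "p s \<noteq> q s" using assms(3) by blast
  with le have "q s < p s" by (simp add: order_less_le)
  hence "(\<Sum>s\<in>UNIV. q s) < (\<Sum>s\<in>UNIV. p s)" using le by (intro sum_strict_mono_ex1) auto
  with assms(1,2) show False by (simp add: is_signal_dist_def)
qed

lemma likelihood_ratio_bounds:
  fixes pH pL :: "'s::finite \<Rightarrow> real"
  assumes H: "is_signal_dist pH" and L: "is_signal_dist pL" and "pH \<noteq> pL"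
  shows "0 < Min (range (\<lambda>s. pH s / pL s))" and "Min (range (\<lambda>s. pH s / pL s)) < 1"
    and "1 < Max (range (\<lambda>s. pH s / pL s))"
proof -
  have pos: "0 < pH s" "0 < pL s" for s using H L by (auto simp: is_signal_dist_def)
  obtain s0 where "Min (range (\<lambda>s. pH s / pL s)) = pH s0 / pL s0"
    using Min_in[of "range (\<lambda>s. pH s / pL s)"] by fastforce
  thus "0 < Min (range (\<lambda>s. pH s / pL s))" using pos by simp
  obtain s1 where "pH s1 < pL s1" using signal_dist_crosses[OF H L \<open>pH \<noteq> pL\<close>] by blast
  hence "pH s1 / pL s1 < 1" using pos by simp
  moreover have "Min (range (\<lambda>s. pH s / pL s)) \<le> pH s1 / pL s1" by (rule Min_le) auto
  ultimately show "Min (range (\<lambda>s. pH s / pL s)) < 1" by linarith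
  obtain s2 where "pL s2 < pH s2" using signal_dist_crosses[OF L H] \<open>pH \<noteq> pL\<close> by metis
  hence "1 < pH s2 / pL s2" using pos by simp
  moreover have "pH s2 / pL s2 \<le> Max (range (\<lambda>s. pH s / pL s))" by (rule Max_ge) auto
  ultimately show "1 < Max (range (\<lambda>s. pH s / pL s))" by linarith
qed

lemma kernel_likelihood_ratio_bounds:
  fixes pH pL :: "'s::finite \<Rightarrow> real"
  assumes "is_signal_dist pL" and f_nonneg: "\<And>s. 0 \<le> f i s j"
  shows "Min (range (\<lambda>s. pH s / pL s)) * kernel pL f i j \<le> kernel pH f i j"
    and "kernel pH f i j \<le> Max (range (\<lambda>s. pH s / pL s)) * kernel pL f i j"
proof -
  have pL: "0 < pL s" for s using assms(1) by (simp add: is_signal_dist_def)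
  have H: "kernel pH f i j = (\<Sum>s\<in>UNIV. pH s / pL s * (pL s * f i s j))"
    unfolding kernel_def using pL by (intro sum.cong) (auto simp: less_imp_neq[symmetric])
  have nonneg: "0 \<le> pL s * f i s j" for s using pL f_nonneg by (simp add: less_imp_le)
  have "Min (range (\<lambda>s. pH s / pL s)) * kernel pL f i j
      = (\<Sum>s\<in>UNIV. Min (range (\<lambda>s. pH s / pL s)) * (pL s * f i s j))"
    by (simp add: kernel_def sum_distrib_left)
  also have "\<dots> \<le> kernel pH f i j"
    unfolding H using nonneg by (intro sum_mono mult_right_mono) auto
  finally show "Min (range (\<lambda>s. pH s / pL s)) * kernel pL f i j \<le> kernel pH f i j" .
  have "kernel pH f i j \<le> (\<Sum>s\<in>UNIV. Max (range (\<lambda>s. pH s / pL s)) * (pL s * f i s j))"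
    unfolding H using nonneg by (intro sum_mono mult_right_mono) auto
  also have "\<dots> = Max (range (\<lambda>s. pH s / pL s)) * kernel pL f i j"
    by (simp add: kernel_def sum_distrib_left)
  finally show "kernel pH f i j \<le> Max (range (\<lambda>s. pH s / pL s)) * kernel pL f i j" .
qed

lemma kernel_nonneg:
  assumes "is_signal_dist p" and "valid_protocol m f g a" and "i \<in> {1..m}" and "j \<in> {1..m}"
  shows "0 \<le> kernel p f i j"
  using assms unfolding kernel_def is_signal_dist_def valid_protocol_def
  by (intro sum_nonneg mult_nonneg_nonneg) (auto simp: less_imp_le)

lemma kernel_row_sum:
  assumes "is_signal_dist p" and "valid_protocol m f g a" and "i \<in> {1..m}"
  shows "(\<Sum>j\<in>{1..m}. kernel p f i j) = 1"
proof -
  have "(\<Sum>j\<in>{1..m}. kernel p f i j) = (\<Sum>s\<in>UNIV. p s * (\<Sum>j\<in>{1..m}. f i s j))"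
    unfolding kernel_def sum_distrib_left by (rule sum.swap)
  also have "\<dots> = 1" using assms by (simp add: valid_protocol_def is_signal_dist_def)
  finally show ?thesis .
qed

lemma kernel_pos_iff:
  assumes "is_signal_dist p" and f_nonneg: "\<And>s. 0 \<le> f i s j"
  shows "0 < kernel p f i j \<longleftrightarrow> (\<exists>s. 0 < f i s j)"
proof -
  have p: "0 < p s" for s using assms(1) by (simp add: is_signal_dist_def)
  have "0 < kernel p f i j \<longleftrightarrow> (\<exists>s. 0 < p s * f i s j)"
    unfolding kernel_def using p f_nonneg by (subst sum_pos_iff_ex_pos) (auto simp: less_imp_le)
  also have "\<dots> \<longleftrightarrow> (\<exists>s. 0 < f i s j)" using p by (metis less_asym zero_less_mult_iff)
  finally show ?thesis .
qed

lemma edge_signal_independent: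
  assumes "is_signal_dist p" and "is_signal_dist q" and "valid_protocol m f g a"
  shows "edge m p f = edge m q f"
proof (intro ext)
  fix i j
  show "edge m p f i j = edge m q f i j"
  proof (cases "i \<in> {1..m} \<and> j \<in> {1..m}")
    case True
    hence "\<And>s. 0 \<le> f i s j" using assms(3) by (simp add: valid_protocol_def)
    thus ?thesis using True
      by (simp add: edge_def kernel_pos_iff[OF assms(1)] kernel_pos_iff[OF assms(2)])
  qed (auto simp: edge_def)
qed

lemma absorbing_iff_self_loop:
  assumes p: "is_signal_dist p" and valid: "valid_protocol m f g a"
  shows "absorbing m p f i \<longleftrightarrow> i \<in> {1..m} \<and> (\<forall>s. f i s i = 1)"
proof (cases "i \<in> {1..m}")
  case True
  have "f i s i \<le> 1" for s
    using valid True member_le_sum[of i "{1..m}" "f i s"] by (simp add: valid_protocol_def)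
  hence slack: "0 \<le> p s * (1 - f i s i)" for s
    using p by (simp add: is_signal_dist_def less_imp_le)
  have "1 - kernel p f i i = (\<Sum>s\<in>UNIV. p s * (1 - f i s i))"
    using p by (simp add: kernel_def is_signal_dist_def algebra_simps sum_subtractf)
  hence "kernel p f i i = 1 \<longleftrightarrow> (\<forall>s. p s * (1 - f i s i) = 0)"
    using sum_nonneg_eq_0_iff[of UNIV "\<lambda>s. p s * (1 - f i s i)"] slack by auto
  also have "\<dots> \<longleftrightarrow> (\<forall>s. f i s i = 1)" using p by (auto simp: is_signal_dist_def less_le)
  finally show ?thesis using True by (simp add: absorbing_def)
qed (auto simp: absorbing_def)

section \<open>Occupation measure of an absorbing chain\<close>

definition restart_kernel :: "nat \<Rightarrow> (nat \<Rightarrow> real) \<Rightarrow> (nat \<Rightarrow> nat \<Rightarrow> real) \<Rightarrow> nat \<Rightarrow> nat \<Rightarrow> real" where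
  "restart_kernel m g K i j = (if i = 1 \<or> i = m then g j else K i j)"

locale absorbing_chain =
  fixes m :: nat and p :: "'s::finite \<Rightarrow> real" and f :: "nat \<Rightarrow> 's \<Rightarrow> nat \<Rightarrow> real"
    and g :: "nat \<Rightarrow> real"
  assumes one_less_m: "1 < m"
    and kernel_nonneg: "\<And>i j. i \<in> {1..m} \<Longrightarrow> j \<in> {1..m} \<Longrightarrow> 0 \<le> kernel p f i j"
    and kernel_row_sum: "\<And>i. i \<in> {1..m} \<Longrightarrow> (\<Sum>j\<in>{1..m}. kernel p f i j) = 1"
    and init_nonneg: "\<And>i. i \<in> {1..m} \<Longrightarrow> 0 \<le> g i"
    and init_sum: "(\<Sum>i\<in>{1..m}. g i) = 1"
    and absorbing_1: "absorbing m p f 1" and absorbing_m: "absorbing m p f m"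
    and reaches_end: "\<And>i. i \<in> {1..m} \<Longrightarrow> (edge m p f)\<^sup>*\<^sup>* i 1 \<or> (edge m p f)\<^sup>*\<^sup>* i m"
begin

abbreviation "K \<equiv> kernel p f"
abbreviation "D n \<equiv> state_dist m p f g n"

lemma sum_states: "(\<Sum>i\<in>{1..m}. h i) = h 1 + h m + (\<Sum>i\<in>{1<..<m}. h i)"
proof -
  have "{1..m} = insert 1 (insert m {1<..<m})" using one_less_m by auto
  thus ?thesis using one_less_m by (simp add: add.assoc)
qed

lemma K_absorbing:
  assumes "a \<in> {1, m}" and "j \<in> {1..m}"
  shows "K a j = (if j = a then 1 else 0)"
proof -
  have a: "a \<in> {1..m}" and Kaa: "K a a = 1"
    using assms(1) absorbing_1 absorbing_m by (auto simp: absorbing_def)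
  have "(\<Sum>j\<in>{1..m} - {a}. K a j) = 0"
    using kernel_row_sum[OF a] Kaa a by (simp add: sum.remove)
  hence "\<forall>j\<in>{1..m} - {a}. K a j = 0"
    using sum_nonneg_eq_0_iff[of "{1..m} - {a}" "K a"] kernel_nonneg a by auto
  thus ?thesis using Kaa assms(2) by auto
qed

lemma D_nonneg: "j \<in> {1..m} \<Longrightarrow> 0 \<le> D n j"
proof (induction n arbitrary: j)
  case (Suc n)
  thus ?case by (auto intro!: sum_nonneg mult_nonneg_nonneg kernel_nonneg)
qed (simp add: init_nonneg)

lemma D_sum: "(\<Sum>j\<in>{1..m}. D n j) = 1"
proof (induction n)
  case (Suc n)
  have "(\<Sum>j\<in>{1..m}. D (Suc n) j) = (\<Sum>i\<in>{1..m}. D n i * (\<Sum>j\<in>{1..m}. K i j))"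
    by (simp add: sum_distrib_left) (rule sum.swap)
  also have "\<dots> = (\<Sum>i\<in>{1..m}. D n i)" using kernel_row_sum by (intro sum.cong) auto
  finally show ?case using Suc by simp
qed (use init_sum in simp)

lemma D_le_1: "j \<in> {1..m} \<Longrightarrow> D n j \<le> 1"
  using member_le_sum[of j "{1..m}" "D n"] D_nonneg D_sum by simp

lemma D_Suc_pos_iff:
  assumes "j \<in> {1..m}"
  shows "0 < D (Suc n) j \<longleftrightarrow> (\<exists>i\<in>{1..m}. 0 < D n i \<and> 0 < K i j)"
proof -
  have nonneg: "0 \<le> D n i" "0 \<le> K i j" if "i \<in> {1..m}" for i
    using that assms D_nonneg kernel_nonneg by simp_all
  have "0 < D (Suc n) j \<longleftrightarrow> (\<exists>i\<in>{1..m}. 0 < D n i * K i j)"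
    unfolding state_dist.simps using nonneg by (intro sum_pos_iff_ex_pos) simp_all
  also have "\<dots> \<longleftrightarrow> (\<exists>i\<in>{1..m}. 0 < D n i \<and> 0 < K i j)"
    using nonneg by (intro bex_cong refl) (simp add: zero_less_mult_iff order_less_le)
  finally show ?thesis .
qed

definition inflow :: "nat \<Rightarrow> nat \<Rightarrow> real" where
  "inflow n j = (\<Sum>i\<in>{1<..<m}. D n i * K i j)"

lemma inflow_nonneg: "j \<in> {1..m} \<Longrightarrow> 0 \<le> inflow n j"
  unfolding inflow_def by (auto intro!: sum_nonneg mult_nonneg_nonneg D_nonneg kernel_nonneg)

lemma D_Suc:
  assumes "j \<in> {1..m}"
  shows "D (Suc n) j = (if j \<in> {1, m} then D n j else 0) + inflow n j"
proof -
  have "D (Suc n) j = D n 1 * K 1 j + D n m * K m j + inflow n j"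
    unfolding inflow_def state_dist.simps by (rule sum_states)
  thus ?thesis using K_absorbing[of 1 j] K_absorbing[of m j] assms one_less_m by auto
qed

lemma D_absorbing_limit:
  assumes "a \<in> {1, m}"
  shows "(\<lambda>n. D n a) \<longlonglongrightarrow> absorb_prob m p f g a" and "incseq (\<lambda>n. D n a)"
proof -
  have a: "a \<in> {1..m}" using assms one_less_m by auto
  show inc: "incseq (\<lambda>n. D n a)"
    using D_Suc[OF a] inflow_nonneg[OF a] assms by (intro incseq_SucI) simp
  obtain L where "(\<lambda>n. D n a) \<longlonglongrightarrow> L" using incseq_convergent[OF inc] D_le_1[OF a] by blast
  thus "(\<lambda>n. D n a) \<longlonglongrightarrow> absorb_prob m p f g a" by (simp add: absorb_prob_def limI)
qed

lemma summable_inflow: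
  assumes "j \<in> {1..m}" and "j \<in> {1, m} \<or> summable (\<lambda>n. D n j)"
  shows "summable (\<lambda>n. inflow n j)"
proof (cases "j \<in> {1, m}")
  case True
  have "inflow n j = D (Suc n) j - D n j" for n using D_Suc[OF assms(1)] True by simp
  thus ?thesis using telescope_summable[OF D_absorbing_limit(1)[OF True]] by simp
next
  case False
  have "inflow n j = D (Suc n) j" for n using D_Suc[OF assms(1)] False by simp
  thus ?thesis using assms(2) False summable_Suc_iff[of "\<lambda>n. D n j"] by simp
qed

lemma summable_D_transient:
  assumes "i \<in> {1<..<m}"
  shows "summable (\<lambda>n. D n i)"
proof -
  have "i \<in> {1, m} \<or> summable (\<lambda>n. D n i)" if reach: "(edge m p f)\<^sup>*\<^sup>* i a" and a: "a \<in> {1, m}"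
    for i a
    using reach
  proof (induction rule: converse_rtranclp_induct)
    case base
    show ?case using a by simp
  next
    case (step i j)
    have ij: "i \<in> {1..m}" "j \<in> {1..m}" "0 < K i j" using step.hyps(1) by (auto simp: edge_def)
    show ?case
    proof (cases "i \<in> {1, m}")
      case False
      hence "i \<in> {1<..<m}" using ij(1) by auto
      hence "D n i * K i j \<le> inflow n j" for n
        unfolding inflow_def using ij(2) D_nonneg kernel_nonneg
        by (intro member_le_sum mult_nonneg_nonneg) simp_all
      hence "norm (D n i) \<le> inflow n j / K i j" for n
        using ij(3) D_nonneg[OF ij(1)] by (simp add: le_divide_eq)
      moreover have "summable (\<lambda>n. inflow n j / K i j)"
        using summable_inflow[OF ij(2) step.IH] by (rule summable_divide)
      ultimately show ?thesis by (metis summable_comparison_test')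
    qed simp
  qed
  moreover obtain a where "a \<in> {1, m}" "(edge m p f)\<^sup>*\<^sup>* i a" using reaches_end[of i] assms by auto
  ultimately show ?thesis using assms by auto
qed

definition occupation :: "nat \<Rightarrow> real" where
  "occupation j = (if j \<in> {1, m} then absorb_prob m p f g j else (\<Sum>n. D n j))"

lemma occupation_sums: "i \<in> {1<..<m} \<Longrightarrow> (\<lambda>n. D n i) sums occupation i"
  using summable_D_transient by (auto simp: occupation_def summable_sums)

lemma absorb_prob_sum: "absorb_prob m p f g 1 + absorb_prob m p f g m = 1"
proof -
  have "(\<lambda>n. D n j) \<longlonglongrightarrow> (if j \<in> {1, m} then absorb_prob m p f g j else 0)" if "j \<in> {1..m}" for j
    using D_absorbing_limit(1) summable_LIMSEQ_zero[OF summable_D_transient] that by auto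
  hence "(\<lambda>n. \<Sum>j\<in>{1..m}. D n j)
      \<longlonglongrightarrow> (\<Sum>j\<in>{1..m}. if j \<in> {1, m} then absorb_prob m p f g j else 0)"
    by (rule tendsto_sum)
  hence "(\<Sum>j\<in>{1..m}. if j \<in> {1, m} then absorb_prob m p f g j else 0) = 1"
    using D_sum by (simp add: LIMSEQ_const_iff)
  thus ?thesis using one_less_m unfolding sum_states by simp
qed

lemma occupation_identity:
  assumes j: "j \<in> {1..m}"
  shows "occupation j = g j + (\<Sum>i\<in>{1<..<m}. occupation i * K i j)"
proof -
  have inflow: "(\<lambda>n. inflow n j) sums (\<Sum>i\<in>{1<..<m}. occupation i * K i j)"
    unfolding inflow_def by (intro sums_sum sums_mult2 occupation_sums)
  show ?thesis
  proof (cases "j \<in> {1, m}")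
    case True
    have "(\<lambda>n. inflow n j) sums (absorb_prob m p f g j - g j)"
      using telescope_sums[OF D_absorbing_limit(1)[OF True]] D_Suc[OF j] True by simp
    moreover have "occupation j = absorb_prob m p f g j" using True by (simp add: occupation_def)
    ultimately show ?thesis using sums_unique2[OF _ inflow] by fastforce
  next
    case False
    have "(\<lambda>n. inflow n j) sums (occupation j - g j)"
      using occupation_sums[of j] D_Suc[OF j] False j sums_Suc_iff[of "\<lambda>n. D n j"] by auto
    thus ?thesis using sums_unique2[OF _ inflow] by fastforce
  qed
qed

lemma occupation_ge_D:
  assumes "j \<in> {1..m}" shows "D n j \<le> occupation j"
proof (cases "j \<in> {1, m}")
  case True
  thus ?thesis using incseq_le[OF D_absorbing_limit(2,1)] by (simp add: occupation_def)
next
  case False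
  thus ?thesis using assms D_nonneg summable_D_transient[of j] sum_le_suminf[of "\<lambda>n. D n j" "{n}"]
    by (simp add: occupation_def)
qed

lemma occupation_nonneg: "j \<in> {1..m} \<Longrightarrow> 0 \<le> occupation j"
  using D_nonneg occupation_ge_D order_trans by blast

lemma occupation_pos_iff:
  assumes j: "j \<in> {1..m}"
  shows "0 < occupation j \<longleftrightarrow> (\<exists>n. 0 < D n j)"
proof
  show "\<exists>n. 0 < D n j \<Longrightarrow> 0 < occupation j"
    using occupation_ge_D[OF j] by (meson order_less_le_trans)
  assume pos: "0 < occupation j"
  show "\<exists>n. 0 < D n j"
  proof (rule ccontr)
    assume "\<not> ?thesis"
    hence "(\<lambda>n. D n j) = (\<lambda>n. 0)" using D_nonneg[OF j] by (auto intro: order_antisym simp: not_less)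
    hence "occupation j = 0"
      using D_absorbing_limit(1)[of j] by (auto simp: occupation_def LIMSEQ_const_iff)
    with pos show False by simp
  qed
qed

lemma occupation_ends_sum: "occupation 1 + occupation m = 1"
  using absorb_prob_sum by (simp add: occupation_def)

lemma occupation_restart_invariant:
  assumes j: "j \<in> {1..m}"
  shows "(\<Sum>i\<in>{1..m}. occupation i * restart_kernel m g K i j) = occupation j"
proof -
  have "(\<Sum>i\<in>{1<..<m}. occupation i * restart_kernel m g K i j) = (\<Sum>i\<in>{1<..<m}. occupation i * K i j)"
    by (intro sum.cong) (auto simp: restart_kernel_def)
  hence "(\<Sum>i\<in>{1..m}. occupation i * restart_kernel m g K i j)
      = (occupation 1 + occupation m) * g j + (\<Sum>i\<in>{1<..<m}. occupation i * K i j)"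
    unfolding sum_states by (simp add: restart_kernel_def distrib_right)
  also have "\<dots> = occupation j"
    using occupation_ends_sum occupation_identity[OF j] by simp
  finally show ?thesis .
qed

lemma occupation_cut_balance:
  assumes "S \<subseteq> {1..m}"
  shows "cut_flow occupation (restart_kernel m g K) S ({1..m} - S)
       = cut_flow occupation (restart_kernel m g K) ({1..m} - S) S"
proof (rule invariant_cut_balance[OF _ assms _ occupation_restart_invariant])
  show "(\<Sum>j\<in>{1..m}. restart_kernel m g K i j) = 1" if "i \<in> {1..m}" for i
    using that init_sum kernel_row_sum[of i]
    by (cases "i = 1 \<or> i = m") (simp_all add: restart_kernel_def)
qed auto

end

section \<open>Comparing two occupation measures\<close>

locale occupation_ratio =
  fixes m :: nat and g wH wL :: "nat \<Rightarrow> real" and KH KL :: "nat \<Rightarrow> nat \<Rightarrow> real"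
    and lo hi :: real
  assumes one_less_m: "1 < m"
    and lo_pos: "0 < lo" and lo_less_1: "lo < 1" and hi_gt_1: "1 < hi"
    and init_nonneg: "\<And>j. j \<in> {1..m} \<Longrightarrow> 0 \<le> g j" and init_sum: "(\<Sum>j\<in>{1..m}. g j) = 1"
    and wH_nonneg: "\<And>i. i \<in> {1..m} \<Longrightarrow> 0 \<le> wH i"
    and wL_nonneg: "\<And>i. i \<in> {1..m} \<Longrightarrow> 0 \<le> wL i"
    and same_support: "\<And>i. i \<in> {1..m} \<Longrightarrow> wH i = 0 \<longleftrightarrow> wL i = 0"
    and wL_1_pos: "0 < wL 1" and wL_m_pos: "0 < wL m"
    and kernel_bounds: "\<And>i j. i \<in> {1<..<m} \<Longrightarrow> j \<in> {1..m} \<Longrightarrow>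
      0 \<le> KL i j \<and> lo * KL i j \<le> KH i j \<and> KH i j \<le> hi * KL i j"
    and balance_H: "\<And>S. S \<subseteq> {1..m} \<Longrightarrow>
      cut_flow wH (restart_kernel m g KH) S ({1..m} - S) = cut_flow wH (restart_kernel m g KH) ({1..m} - S) S"
    and balance_L: "\<And>S. S \<subseteq> {1..m} \<Longrightarrow>
      cut_flow wL (restart_kernel m g KL) S ({1..m} - S) = cut_flow wL (restart_kernel m g KL) ({1..m} - S) S"
begin

abbreviation "RH \<equiv> restart_kernel m g KH"
abbreviation "RL \<equiv> restart_kernel m g KL"

(* rho i = 0 where wL i = 0; by same_support, wH_eq holds there as well. *)
definition rho :: "nat \<Rightarrow> real" where
  "rho i = wH i / wL i"

definition \<gamma> :: real where
  "\<gamma> = hi / lo"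

definition superlevel :: "real \<Rightarrow> nat set" where
  "superlevel c = {i \<in> {1..m}. c < rho i}"

lemma wH_eq: "i \<in> {1..m} \<Longrightarrow> wH i = rho i * wL i"
  using same_support by (cases "wL i = 0") (auto simp: rho_def)

lemma rho_nonneg: "i \<in> {1..m} \<Longrightarrow> 0 \<le> rho i"
  using wH_nonneg wL_nonneg by (simp add: rho_def)

lemma rho_1_pos: "0 < rho 1" and rho_m_pos: "0 < rho m"
  using wL_1_pos wL_m_pos wH_nonneg same_support one_less_m
  by (auto simp: rho_def order_less_le)

lemma hi_less_\<gamma>: "hi < \<gamma>" and one_less_\<gamma>: "1 < \<gamma>"
  using lo_pos lo_less_1 hi_gt_1 by (simp_all add: \<gamma>_def divide_strict_right_mono less_divide_eq)

lemma init_split: "S \<subseteq> {1..m} \<Longrightarrow> sum g S + sum g ({1..m} - S) = 1"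
  using init_sum by (metis add.commute finite_atLeastAtMost sum.subset_diff)

lemma RL_nonneg: "i \<in> {1..m} \<Longrightarrow> j \<in> {1..m} \<Longrightarrow> 0 \<le> RL i j"
  using init_nonneg kernel_bounds[of i j] by (auto simp: restart_kernel_def)

lemma transient_term_lower:
  assumes "i \<in> {1<..<m}" and "j \<in> {1..m}" and "x \<le> lo * rho i"
  shows "x * (wL i * KL i j) \<le> wH i * KH i j"
proof -
  have "x * (wL i * KL i j) \<le> lo * rho i * (wL i * KL i j)"
    using assms kernel_bounds wL_nonneg by (intro mult_right_mono) auto
  also have "\<dots> = (rho i * wL i) * (lo * KL i j)" by (simp add: algebra_simps)
  also have "\<dots> \<le> (rho i * wL i) * KH i j"
    using assms kernel_bounds[of i j] rho_nonneg[of i] wL_nonneg[of i] by (intro mult_left_mono) auto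
  finally show ?thesis using wH_eq[of i] assms(1) by simp
qed

lemma transient_term_upper:
  assumes "i \<in> {1<..<m}" and "j \<in> {1..m}" and "wL i \<noteq> 0 \<Longrightarrow> hi * rho i \<le> y"
  shows "wH i * KH i j \<le> y * (wL i * KL i j)"
proof (cases "wL i = 0")
  case True
  thus ?thesis using same_support[of i] assms(1) by simp
next
  case False
  have "wH i * KH i j \<le> rho i * wL i * (hi * KL i j)"
    using assms kernel_bounds[of i j] rho_nonneg[of i] wL_nonneg[of i] wH_eq[of i]
    by (simp add: mult_left_mono)
  also have "\<dots> = (hi * rho i) * (wL i * KL i j)" by (simp add: algebra_simps)
  also have "\<dots> \<le> y * (wL i * KL i j)"
    using assms False kernel_bounds[of i j] wL_nonneg[of i] by (intro mult_right_mono) auto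
  finally show ?thesis .
qed

lemma cut_flow_lower:
  assumes "S \<subseteq> {1..m}" and "m \<in> S" and "1 \<notin> S" and "U \<subseteq> {1..m}"
    and x: "\<And>i. i \<in> S \<inter> {1<..<m} \<Longrightarrow> x \<le> lo * rho i"
  shows "x * cut_flow wL RL S U + (rho m - x) * wL m * sum g U \<le> cut_flow wH RH S U"
proof -
  have fin: "finite S" using assms(1) finite_subset by blast
  have "x * cut_flow wL RL (S - {m}) U \<le> cut_flow wH RH (S - {m}) U"
  proof (rule cut_flow_scaled_le)
    fix i j assume "i \<in> S - {m}" "j \<in> U"
    moreover from this have "i \<in> {1<..<m}" using assms(1,3) by (force simp: subset_iff)
    moreover have "j \<in> {1..m}" using \<open>j \<in> U\<close> assms(4) by blast
    ultimately show "x * (wL i * RL i j) \<le> wH i * RH i j"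
      using transient_term_lower x by (simp add: restart_kernel_def)
  qed
  moreover have "(\<Sum>j\<in>U. wH m * RH m j) = x * (\<Sum>j\<in>U. wL m * RL m j) + (rho m - x) * wL m * sum g U"
    using wH_eq[of m] one_less_m by (simp add: restart_kernel_def flip: sum_distrib_left) (simp add: algebra_simps)
  ultimately show ?thesis
    unfolding cut_flow_remove[OF fin assms(2), of wL] cut_flow_remove[OF fin assms(2), of wH]
    by (simp add: algebra_simps)
qed

lemma cut_flow_upper:
  assumes "S \<subseteq> {1..m}" and "1 \<in> S" and "m \<notin> S" and "U \<subseteq> {1..m}"
    and y: "\<And>i. i \<in> S \<inter> {1<..<m} \<Longrightarrow> wL i \<noteq> 0 \<Longrightarrow> hi * rho i \<le> y"
  shows "cut_flow wH RH S U + (y - rho 1) * wL 1 * sum g U \<le> y * cut_flow wL RL S U"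
proof -
  have fin: "finite S" using assms(1) finite_subset by blast
  have "1 * cut_flow wH RH (S - {1}) U \<le> cut_flow (\<lambda>i. y * wL i) RL (S - {1}) U"
  proof (rule cut_flow_scaled_le)
    fix i j assume "i \<in> S - {1}" "j \<in> U"
    moreover from this have "i \<in> {1<..<m}" using assms(1,3) by (force simp: subset_iff)
    moreover have "j \<in> {1..m}" using \<open>j \<in> U\<close> assms(4) by blast
    ultimately show "1 * (wH i * RH i j) \<le> y * wL i * RL i j"
      using transient_term_upper y by (simp add: restart_kernel_def mult.assoc)
  qed
  moreover have "cut_flow (\<lambda>i. y * wL i) RL (S - {1}) U = y * cut_flow wL RL (S - {1}) U"
    by (simp add: cut_flow_def sum_distrib_left mult.assoc)
  moreover have "(\<Sum>j\<in>U. wH 1 * RH 1 j) + (y - rho 1) * wL 1 * sum g U = y * (\<Sum>j\<in>U. wL 1 * RL 1 j)"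
    using wH_eq[of 1] one_less_m by (simp add: restart_kernel_def flip: sum_distrib_left) (simp add: algebra_simps)
  ultimately show ?thesis
    unfolding cut_flow_remove[OF fin assms(2), of wL] cut_flow_remove[OF fin assms(2), of wH]
    by (simp add: algebra_simps)
qed

lemma cut_flow_L_pos:
  assumes "S \<subseteq> {1..m}" and "m \<in> S" and "1 \<notin> S"
  shows "0 < cut_flow wL RL S ({1..m} - S)"
proof -
  have lower: "wL a * sum g U \<le> cut_flow wL RL A U"
    if "A \<subseteq> {1..m}" "a \<in> A" "a \<in> {1, m}" "U \<subseteq> {1..m}" for A U a
  proof -
    have "0 \<le> cut_flow wL RL (A - {a}) U"
      unfolding cut_flow_def using that by (intro sum_nonneg mult_nonneg_nonneg wL_nonneg RL_nonneg) auto
    moreover have "finite A" using that(1) finite_subset by blast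
    ultimately show ?thesis
      using cut_flow_remove[of A a wL RL U] that by (auto simp: restart_kernel_def sum_distrib_left)
  qed
  show ?thesis
  proof (cases "0 < sum g ({1..m} - S)")
    case True
    hence "0 < wL m * sum g ({1..m} - S)" using wL_m_pos by simp
    also have "\<dots> \<le> cut_flow wL RL S ({1..m} - S)" using lower[of S m] assms by auto
    finally show ?thesis .
  next
    case False
    hence "sum g S = 1"
      using init_split[OF assms(1)] assms(1) init_nonneg sum_nonneg[of "{1..m} - S" g] by auto
    hence "0 < wL 1 * sum g S" using wL_1_pos by simp
    also have "\<dots> \<le> cut_flow wL RL S ({1..m} - S)"
      using lower[of "{1..m} - S" 1 S] balance_L[OF assms(1)] assms one_less_m by auto
    finally show ?thesis .
  qed
qed

lemma cut_comparison:
  assumes S: "S \<subseteq> {1..m}" "m \<in> S" "1 \<notin> S"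
    and x: "\<And>i. i \<in> S \<inter> {1<..<m} \<Longrightarrow> x \<le> lo * rho i" and x_m: "x \<le> rho m"
    and y: "\<And>i. i \<in> {1<..<m} - S \<Longrightarrow> wL i \<noteq> 0 \<Longrightarrow> hi * rho i \<le> y" and y_1: "rho 1 \<le> y"
  shows "x \<le> y" and "x < rho m \<Longrightarrow> rho 1 < y \<Longrightarrow> x < y"
proof -
  let ?U = "{1..m} - S"
  define slack where "slack = (rho m - x) * wL m * sum g ?U + (y - rho 1) * wL 1 * sum g S"
  have "x * cut_flow wL RL S ?U + (rho m - x) * wL m * sum g ?U \<le> cut_flow wH RH S ?U"
    using S x by (intro cut_flow_lower) auto
  moreover have "cut_flow wH RH ?U S + (y - rho 1) * wL 1 * sum g S \<le> y * cut_flow wL RL ?U S"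
    using S y one_less_m by (intro cut_flow_upper) auto
  ultimately have slack_le: "slack \<le> (y - x) * cut_flow wL RL S ?U"
    using balance_H[OF S(1)] balance_L[OF S(1)] by (simp add: slack_def algebra_simps)
  have g: "sum g S + sum g ?U = 1" by (rule init_split[OF S(1)])
  have g_nonneg: "0 \<le> sum g S" "0 \<le> sum g ?U"
    using S(1) init_nonneg by (auto intro!: sum_nonneg)
  have flow_pos: "0 < cut_flow wL RL S ?U" by (rule cut_flow_L_pos[OF S])
  have "0 \<le> slack" using x_m y_1 g_nonneg wL_1_pos wL_m_pos by (simp add: slack_def)
  hence "0 \<le> (y - x) * cut_flow wL RL S ?U" using slack_le by linarith
  hence "0 \<le> y - x" using flow_pos by (simp add: zero_le_mult_iff)
  thus "x \<le> y" by simp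
  assume "x < rho m" and "rho 1 < y"
  hence A: "0 < (rho m - x) * wL m" and B: "0 < (y - rho 1) * wL 1"
    using wL_1_pos wL_m_pos by simp_all
  have "0 < slack"
  proof (cases "0 < sum g ?U")
    case True
    show ?thesis unfolding slack_def
      by (rule add_pos_nonneg[OF mult_pos_pos[OF A True] mult_nonneg_nonneg[OF _ g_nonneg(1)]])
        (use B in simp)
  next
    case False
    hence "sum g ?U = 0" "sum g S = 1" using g g_nonneg by linarith+
    thus ?thesis unfolding slack_def using B by simp
  qed
  hence "0 < (y - x) * cut_flow wL RL S ?U" using slack_le by linarith
  hence "0 < y - x" using flow_pos by (simp add: zero_less_mult_iff)
  thus "x < y" by simp
qed

lemma superlevel_subset: "superlevel c \<subseteq> {1..m}"
  and m_in_superlevel: "c < rho m \<Longrightarrow> m \<in> superlevel c"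
  and one_notin_superlevel: "rho 1 \<le> c \<Longrightarrow> 1 \<notin> superlevel c"
  using one_less_m by (auto simp: superlevel_def)

lemma superlevel_min:
  assumes "c < rho m"
  obtains i0 where "i0 \<in> superlevel c" and "\<And>i. i \<in> superlevel c \<Longrightarrow> rho i0 \<le> rho i"
proof -
  have fin: "finite (superlevel c)" using superlevel_subset by (rule finite_subset) simp
  moreover have "rho ` superlevel c \<noteq> {}" using m_in_superlevel[OF assms] by auto
  ultimately obtain i0 where "i0 \<in> superlevel c" "rho i0 = Min (rho ` superlevel c)"
    using Min_in by (metis finite_imageI imageE)
  thus ?thesis using that fin by simp
qed

lemma \<gamma>_power_le: "k \<le> n \<Longrightarrow> \<gamma> ^ k \<le> \<gamma> ^ n"
  and \<gamma>_power_less: "k < n \<Longrightarrow> \<gamma> ^ k < \<gamma> ^ n"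
  using one_less_\<gamma> by (simp_all add: power_increasing power_strict_increasing)

lemma superlevel_gap_le:
  assumes c: "rho 1 \<le> c" "c < rho m" and c': "\<And>i. i \<in> superlevel c \<Longrightarrow> c' \<le> rho i"
  shows "(if superlevel c \<inter> {1<..<m} = {} then 1 else lo) * c'
    \<le> (if \<forall>i\<in>{1<..<m} - superlevel c. wL i = 0 then 1 else hi) * c"
    (is "?\<alpha> * c' \<le> ?\<beta> * c")
proof (rule cut_comparison(1)[OF superlevel_subset m_in_superlevel[OF c(2)] one_notin_superlevel[OF c(1)]])
  have "0 < ?\<alpha>" "?\<alpha> \<le> 1" "1 \<le> ?\<beta>" using lo_pos lo_less_1 hi_gt_1 by auto
  have "c' \<le> rho m" using c' m_in_superlevel[OF c(2)] .
  hence "?\<alpha> * c' \<le> ?\<alpha> * rho m" using \<open>0 < ?\<alpha>\<close> by (intro mult_left_mono) auto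
  also have "\<dots> \<le> rho m"
    using \<open>0 < ?\<alpha>\<close> \<open>?\<alpha> \<le> 1\<close> rho_m_pos by (intro mult_left_le_one_le) auto
  finally show "?\<alpha> * c' \<le> rho m" .
  show "?\<alpha> * c' \<le> lo * rho i" if "i \<in> superlevel c \<inter> {1<..<m}" for i
    using that c' lo_pos by (auto intro: mult_left_mono)
  have "c \<le> ?\<beta> * c" using \<open>1 \<le> ?\<beta>\<close> c(1) rho_1_pos mult_right_mono[of 1 ?\<beta> c] by simp
  thus "rho 1 \<le> ?\<beta> * c" using c(1) by simp
  show "hi * rho i \<le> ?\<beta> * c" if "i \<in> {1<..<m} - superlevel c" and "wL i \<noteq> 0" for i
    using that hi_gt_1 by (auto simp: superlevel_def)
qed

lemma superlevel_gap_less: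
  assumes c: "rho 1 \<le> c" "c < rho m" and c': "\<And>i. i \<in> superlevel c \<Longrightarrow> c' \<le> rho i"
  shows "c' < \<gamma> * c"
proof (rule ccontr)
  assume "\<not> c' < \<gamma> * c"
  have c_pos: "0 < c" using c(1) rho_1_pos by linarith
  have lo_\<gamma>: "lo * \<gamma> = hi" using lo_pos by (simp add: \<gamma>_def)
  have "hi * c < \<gamma> * c" using hi_less_\<gamma> c_pos by simp
  also have "\<dots> \<le> c'" using \<open>\<not> c' < \<gamma> * c\<close> by simp
  finally have hi_c: "hi * c < c'" .
  have "hi * c < hi * c"
  proof (rule cut_comparison(2)[OF superlevel_subset m_in_superlevel[OF c(2)] one_notin_superlevel[OF c(1)]])
    show "hi * c \<le> lo * rho i" if "i \<in> superlevel c \<inter> {1<..<m}" for i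
    proof -
      have "hi * c = lo * (\<gamma> * c)" using lo_\<gamma> by simp
      also have "\<dots> \<le> lo * rho i"
        using \<open>\<not> c' < \<gamma> * c\<close> c'[of i] that lo_pos by (intro mult_left_mono) auto
      finally show ?thesis .
    qed
    show "hi * c < rho m" using hi_c c' m_in_superlevel[OF c(2)] by fastforce
    thus "hi * c \<le> rho m" by simp
    show "hi * rho i \<le> hi * c" if "i \<in> {1<..<m} - superlevel c" for i
      using that hi_gt_1 by (auto simp: superlevel_def)
    have "c < hi * c" using c_pos hi_gt_1 by simp
    thus "rho 1 < hi * c" using c(1) by simp
    thus "rho 1 \<le> hi * c" by simp
  qed
  thus False by simp
qed

lemma superlevel_cases: "rho 1 \<le> c \<Longrightarrow> i \<in> superlevel c \<Longrightarrow> i = m \<or> i \<in> {1<..<m}"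
  using one_notin_superlevel[of c] by (cases "i = 1") (auto simp: superlevel_def)

lemma superlevel_next_level:
  assumes "rho 1 \<le> c" and "i0 \<in> superlevel c" and "rho i0 \<noteq> rho m"
  shows "i0 \<in> {1<..<m}"
    and "card (superlevel (rho i0) \<inter> {1<..<m}) < card (superlevel c \<inter> {1<..<m})"
proof -
  show T: "i0 \<in> {1<..<m}" using superlevel_cases[OF assms(1,2)] assms(3) by auto
  have "superlevel (rho i0) \<inter> {1<..<m} \<subseteq> superlevel c \<inter> {1<..<m}"
    using assms(2) by (auto simp: superlevel_def)
  moreover have "i0 \<in> superlevel c \<inter> {1<..<m}" "i0 \<notin> superlevel (rho i0)"
    using assms(2) T by (simp_all add: superlevel_def)
  ultimately have "superlevel (rho i0) \<inter> {1<..<m} \<subset> superlevel c \<inter> {1<..<m}" by blast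
  thus "card (superlevel (rho i0) \<inter> {1<..<m}) < card (superlevel c \<inter> {1<..<m})"
    by (intro psubset_card_mono) simp_all
qed

(* Each step goes from c to the least rho above c, which is below gamma * c, and below
   hi * c when no transient state lies above c. *)
lemma rho_m_chain:
  assumes "rho 1 \<le> c"
  shows "rho m \<le> hi * \<gamma> ^ card (superlevel c \<inter> {1<..<m}) * c \<and>
    (superlevel c \<inter> {1<..<m} \<noteq> {} \<longrightarrow> rho m < hi * \<gamma> ^ card (superlevel c \<inter> {1<..<m}) * c)"
  using assms
proof (induction "card (superlevel c \<inter> {1<..<m})" arbitrary: c rule: less_induct)
  case less
  define k where "k = card (superlevel c \<inter> {1<..<m})"
  have c_pos: "0 < c" using less.prems rho_1_pos by linarith
  have "1 * 1 < hi * \<gamma> ^ k"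
    using hi_gt_1 \<gamma>_power_le[of 0 k] by (intro mult_less_le_imp_less) simp_all
  hence c_less: "c < hi * \<gamma> ^ k * c" using c_pos by simp
  show ?case
  proof (cases "rho m \<le> c")
    case True
    thus ?thesis using c_less by (simp add: k_def)
  next
    case False
    then obtain i0 where i0: "i0 \<in> superlevel c" "\<And>i. i \<in> superlevel c \<Longrightarrow> rho i0 \<le> rho i"
      using superlevel_min by (metis not_le)
    show ?thesis
    proof (cases "superlevel c \<inter> {1<..<m} = {}")
      case True
      hence "i0 = m" using superlevel_cases[OF less.prems i0(1)] i0(1) by blast
      moreover have "(if \<forall>i\<in>{1<..<m} - superlevel c. wL i = 0 then 1 else hi) * c \<le> hi * c"
        using hi_gt_1 c_pos by simp
      ultimately have "rho m \<le> hi * c"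
        using superlevel_gap_le[OF less.prems _ i0(2)] True False by simp
      thus ?thesis using True by (simp add: k_def)
    next
      case False
      have "0 < k" using False unfolding k_def by (simp add: card_gt_0_iff)
      have gap: "rho i0 < \<gamma> * c"
        using superlevel_gap_less[OF less.prems _ i0(2)] \<open>\<not> rho m \<le> c\<close> by simp
      have "rho m < hi * \<gamma> ^ k * c"
      proof (cases "rho i0 = rho m")
        case True
        have "\<gamma> * c \<le> 1 * \<gamma> ^ k * c"
          using \<gamma>_power_le[of 1 k] \<open>0 < k\<close> c_pos by (intro mult_right_mono) simp_all
        also have "\<dots> \<le> hi * \<gamma> ^ k * c"
          using hi_gt_1 one_less_\<gamma> c_pos by (intro mult_right_mono) simp_all
        finally show ?thesis using gap True by simp
      next
        case False
        have k': "card (superlevel (rho i0) \<inter> {1<..<m}) < k"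
          using superlevel_next_level(2)[OF less.prems i0(1) False] by (simp add: k_def)
        have "rho 1 \<le> rho i0" using i0(1) less.prems by (simp add: superlevel_def)
        hence "rho m \<le> hi * \<gamma> ^ card (superlevel (rho i0) \<inter> {1<..<m}) * rho i0"
          using less.hyps k' unfolding k_def by blast
        also have "\<dots> < hi * \<gamma> ^ card (superlevel (rho i0) \<inter> {1<..<m}) * (\<gamma> * c)"
          using gap hi_gt_1 one_less_\<gamma> by (intro mult_strict_left_mono) simp_all
        also have "\<dots> = hi * \<gamma> ^ Suc (card (superlevel (rho i0) \<inter> {1<..<m})) * c" by simp
        also have "\<dots> \<le> hi * \<gamma> ^ k * c"
          using \<gamma>_power_le[of "Suc _" k] k' hi_gt_1 c_pos
          by (intro mult_right_mono mult_left_mono) simp_all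
        finally show ?thesis .
      qed
      thus ?thesis by (simp add: k_def)
    qed
  qed
qed

lemma rho_m_bound_if_transient_below:
  assumes "i \<in> {1<..<m}" and "rho i \<le> rho 1"
  shows "rho m < \<gamma> ^ (m - 2) * rho 1"
proof -
  let ?k = "card (superlevel (rho 1) \<inter> {1<..<m})"
  have "superlevel (rho 1) \<inter> {1<..<m} \<subseteq> {1<..<m} - {i}"
    using assms(2) by (auto simp: superlevel_def)
  hence "?k \<le> card ({1<..<m} - {i})" by (intro card_mono) auto
  hence k: "Suc ?k \<le> m - 2" using assms(1) by auto
  have "rho m \<le> hi * \<gamma> ^ ?k * rho 1" using rho_m_chain[of "rho 1"] by simp
  also have "\<dots> < \<gamma> * \<gamma> ^ ?k * rho 1"
    using hi_less_\<gamma> rho_1_pos one_less_\<gamma> by (intro mult_strict_right_mono) simp_all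
  also have "\<dots> \<le> \<gamma> ^ (m - 2) * rho 1"
    using \<gamma>_power_le[OF k] rho_1_pos by (intro mult_right_mono) simp_all
  finally show ?thesis .
qed

lemma rho_m_bound_if_transients_above:
  assumes "rho 1 < rho m" and "{1<..<m} \<subseteq> superlevel (rho 1)"
  shows "rho m \<le> \<gamma> ^ (m - 2) * rho 1 \<and> (4 \<le> m \<longrightarrow> rho m < \<gamma> ^ (m - 2) * rho 1)"
proof -
  obtain i0 where i0: "i0 \<in> superlevel (rho 1)" "\<And>i. i \<in> superlevel (rho 1) \<Longrightarrow> rho i0 \<le> rho i"
    using superlevel_min[OF assms(1)] by blast
  have "(if \<forall>i\<in>{1<..<m} - superlevel (rho 1). wL i = 0 then 1 else hi) = (1::real)"
    using assms(2) by auto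
  hence gap: "(if superlevel (rho 1) \<inter> {1<..<m} = {} then 1 else lo) * rho i0 \<le> rho 1"
    using superlevel_gap_le[OF order_refl assms(1) i0(2)] by simp
  have "{1<..<m} \<noteq> {}"
  proof
    assume "{1<..<m} = {}"
    hence "rho i0 \<le> rho 1" using gap by simp
    thus False using i0(1) by (simp add: superlevel_def)
  qed
  hence m3: "3 \<le> m" by fastforce
  have "lo * rho i0 \<le> rho 1" using gap assms(2) \<open>{1<..<m} \<noteq> {}\<close> by (simp add: Int_absorb1)
  hence hi_i0: "hi * rho i0 \<le> \<gamma> * rho 1"
    using lo_pos hi_gt_1 by (simp add: \<gamma>_def field_simps)
  have "rho m < \<gamma> ^ (m - 2) * rho 1 \<or> (m = 3 \<and> rho m \<le> \<gamma> ^ (m - 2) * rho 1)"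
  proof (cases "rho i0 = rho m")
    case True
    have "rho m < hi * rho i0" using True rho_m_pos hi_gt_1 by simp
    also have "\<dots> \<le> \<gamma> * rho 1" by (rule hi_i0)
    also have "\<dots> \<le> \<gamma> ^ (m - 2) * rho 1"
      using \<gamma>_power_le[of 1 "m - 2"] m3 rho_1_pos by (intro mult_right_mono) simp_all
    finally show ?thesis by simp
  next
    case False
    let ?k = "card (superlevel (rho i0) \<inter> {1<..<m})"
    have "card (superlevel (rho 1) \<inter> {1<..<m}) \<le> card {1<..<m}" by (intro card_mono) auto
    hence k: "Suc ?k \<le> m - 2" using superlevel_next_level(2)[OF order_refl i0(1) False] by simp
    have "rho 1 \<le> rho i0" using i0(1) by (simp add: superlevel_def)
    note chain = rho_m_chain[OF this]
    have "hi * \<gamma> ^ ?k * rho i0 \<le> \<gamma> ^ Suc ?k * rho 1"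
      using hi_i0 one_less_\<gamma> mult_left_mono[OF hi_i0, of "\<gamma> ^ ?k"] by (simp add: algebra_simps)
    also have "\<dots> \<le> \<gamma> ^ (m - 2) * rho 1"
      using \<gamma>_power_le[OF k] rho_1_pos by (intro mult_right_mono) simp_all
    finally have le: "hi * \<gamma> ^ ?k * rho i0 \<le> \<gamma> ^ (m - 2) * rho 1" .
    show ?thesis
    proof (cases "superlevel (rho i0) \<inter> {1<..<m} = {}")
      case True
      hence "rho m \<le> hi * rho i0" using conjunct1[OF chain] by simp
      hence le_\<gamma>: "rho m \<le> \<gamma> * rho 1" using hi_i0 by linarith
      show ?thesis
      proof (cases "m = 3")
        case False
        hence "\<gamma> * rho 1 < \<gamma> ^ (m - 2) * rho 1"
          using \<gamma>_power_less[of 1 "m - 2"] m3 rho_1_pos by simp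
        thus ?thesis using le_\<gamma> by linarith
      qed (use le_\<gamma> in simp)
    next
      case False
      hence "rho m < hi * \<gamma> ^ ?k * rho i0" using conjunct2[OF chain] by blast
      thus ?thesis using le by linarith
    qed
  qed
  thus ?thesis using m3 by auto
qed

lemma rho_m_bound: "rho m \<le> \<gamma> ^ (m - 2) * rho 1 \<and> (4 \<le> m \<longrightarrow> rho m < \<gamma> ^ (m - 2) * rho 1)"
proof (cases "rho m \<le> rho 1")
  case True
  have "rho 1 \<le> \<gamma> ^ (m - 2) * rho 1"
    using \<gamma>_power_le[of 0 "m - 2"] rho_1_pos by simp
  moreover have "4 \<le> m \<Longrightarrow> rho 1 < \<gamma> ^ (m - 2) * rho 1"
    using \<gamma>_power_less[of 0 "m - 2"] rho_1_pos by simp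
  ultimately show ?thesis using True by linarith
next
  case False
  show ?thesis
  proof (cases "{1<..<m} \<subseteq> superlevel (rho 1)")
    case True
    thus ?thesis using rho_m_bound_if_transients_above False by simp
  next
    case False
    then obtain i where "i \<in> {1<..<m}" "i \<notin> superlevel (rho 1)" by blast
    hence "rho i \<le> rho 1" by (simp add: superlevel_def)
    thus ?thesis using rho_m_bound_if_transient_below[OF \<open>i \<in> {1<..<m}\<close>] less_imp_le by blast
  qed
qed

lemma ratio_bound:
  "wH m * wL 1 \<le> \<gamma> ^ (m - 2) * wH 1 * wL m \<and>
   (4 \<le> m \<longrightarrow> wH m * wL 1 < \<gamma> ^ (m - 2) * wH 1 * wL m)"
proof -
  have "wH m * wL 1 = rho m * (wL m * wL 1)"
    and "\<gamma> ^ (m - 2) * wH 1 * wL m = \<gamma> ^ (m - 2) * rho 1 * (wL m * wL 1)"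
    using wH_eq[of m] wH_eq[of 1] one_less_m by simp_all
  moreover have "0 < wL m * wL 1" using wL_1_pos wL_m_pos by simp
  ultimately show ?thesis
    using rho_m_bound mult_right_mono[OF _ less_imp_le] mult_strict_right_mono by metis
qed

end

section \<open>Parsimonious protocols\<close>

lemma parsimonious_absorbing_chain:
  assumes "is_signal_dist piH" and "is_signal_dist p" and valid: "valid_protocol m f g a"
    and pars: "parsimonious m piH f a"
    and "absorbing m piH f 1" and "absorbing m piH f m" and "1 \<noteq> m"
  shows "absorbing_chain m p f g"
proof
  show "1 < m" using assms(5,7) by (simp add: absorbing_def)
  show "absorbing m p f 1" "absorbing m p f m"
    using assms(5,6) absorbing_iff_self_loop[OF assms(1) valid] absorbing_iff_self_loop[OF assms(2) valid]
    by simp_all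
  have absorbing_ends: "absorbing m piH f i \<longleftrightarrow> i = 1 \<or> i = m" for i
  proof -
    obtain i0 i1 where "i0 \<noteq> i1" "{i \<in> {1..m}. absorbing m piH f i} = {i0, i1}"
      using pars by (auto simp: parsimonious_def)
    moreover have "1 \<in> {i \<in> {1..m}. absorbing m piH f i}" "m \<in> {i \<in> {1..m}. absorbing m piH f i}"
      using assms(5,6) by (auto simp: absorbing_def)
    ultimately have "{i \<in> {1..m}. absorbing m piH f i} = {1, m}" using \<open>1 \<noteq> m\<close> by auto
    thus ?thesis by (auto simp: absorbing_def)
  qed
  fix i assume "i \<in> {1..m}"
  have "\<exists>e. absorbing m piH f e \<and> (edge m piH f)\<^sup>*\<^sup>* i e"
  proof (rule reaches_absorbing[of "{1..m}"])
    show "\<exists>j. (edge m piH f)\<^sup>*\<^sup>* k j \<and> \<not> (edge m piH f)\<^sup>*\<^sup>* j k"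
      if "k \<in> {1..m}" and "\<not> absorbing m piH f k" for k
      using pars that by (auto simp: parsimonious_def transient_def)
  qed (use \<open>i \<in> {1..m}\<close> in \<open>auto simp: edge_def\<close>)
  thus "(edge m p f)\<^sup>*\<^sup>* i 1 \<or> (edge m p f)\<^sup>*\<^sup>* i m"
    using absorbing_ends edge_signal_independent[OF assms(1,2) valid] by auto
qed (use kernel_nonneg[OF assms(2) valid] kernel_row_sum[OF assms(2) valid] valid
      in \<open>auto simp: valid_protocol_def\<close>)

locale signal_comparison = H: absorbing_chain m pH f g + L: absorbing_chain m pL f g
  for m :: nat and pH pL :: "'s::finite \<Rightarrow> real" and f g +
  assumes signal_dist_H: "is_signal_dist pH" and signal_dist_L: "is_signal_dist pL"
    and distinct_signals: "pH \<noteq> pL"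
    and transition_nonneg: "\<And>i s j. i \<in> {1..m} \<Longrightarrow> j \<in> {1..m} \<Longrightarrow> 0 \<le> f i s j"
begin

lemma state_dist_same_support:
  "j \<in> {1..m} \<Longrightarrow> 0 < H.D n j \<longleftrightarrow> 0 < L.D n j"
proof (induction n arbitrary: j)
  case (Suc n)
  have "0 < H.K i j \<longleftrightarrow> 0 < L.K i j" if "i \<in> {1..m}" for i
    using kernel_pos_iff[OF signal_dist_H] kernel_pos_iff[OF signal_dist_L]
      transition_nonneg[OF that Suc.prems] by simp
  thus ?case using H.D_Suc_pos_iff[OF Suc.prems] L.D_Suc_pos_iff[OF Suc.prems] Suc.IH by auto
qed simp

lemma occupation_same_support:
  "i \<in> {1..m} \<Longrightarrow> H.occupation i = 0 \<longleftrightarrow> L.occupation i = 0"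
  using H.occupation_pos_iff L.occupation_pos_iff H.occupation_nonneg L.occupation_nonneg
    state_dist_same_support by (metis order_less_le)

lemma absorb_prob_ratio_bound:
  "absorb_prob m pH f g m * absorb_prob m pL f g 1
      \<le> gamma pH pL ^ (m - 2) * absorb_prob m pH f g 1 * absorb_prob m pL f g m \<and>
   (m \<ge> 4 \<longrightarrow> absorb_prob m pH f g 1 \<noteq> 0 \<longrightarrow> absorb_prob m pH f g m \<noteq> 0 \<longrightarrow>
    absorb_prob m pL f g 1 \<noteq> 0 \<longrightarrow> absorb_prob m pL f g m \<noteq> 0 \<longrightarrow>
    absorb_prob m pH f g m * absorb_prob m pL f g 1
      < gamma pH pL ^ (m - 2) * absorb_prob m pH f g 1 * absorb_prob m pL f g m)"
proof -
  have ends: "1 \<in> {1..m}" "m \<in> {1..m}" using H.one_less_m by auto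
  have occupation_ends: "H.occupation 1 = absorb_prob m pH f g 1" "H.occupation m = absorb_prob m pH f g m"
    "L.occupation 1 = absorb_prob m pL f g 1" "L.occupation m = absorb_prob m pL f g m"
    by (simp_all add: H.occupation_def L.occupation_def)
  show ?thesis
  proof (cases "L.occupation 1 = 0 \<or> L.occupation m = 0")
    case True
    hence "(absorb_prob m pH f g 1 = 0 \<and> absorb_prob m pL f g 1 = 0) \<or>
        (absorb_prob m pH f g m = 0 \<and> absorb_prob m pL f g m = 0)"
      using occupation_same_support[OF ends(1)] occupation_same_support[OF ends(2)]
      unfolding occupation_ends by blast
    thus ?thesis by auto
  next
    case False
    interpret ratio: occupation_ratio m g H.occupation L.occupation "kernel pH f" "kernel pL f"
      "Min (range (\<lambda>s. pH s / pL s))" "Max (range (\<lambda>s. pH s / pL s))"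
    proof
      show "0 < L.occupation 1" "0 < L.occupation m"
        using False L.occupation_nonneg[OF ends(1)] L.occupation_nonneg[OF ends(2)] by simp_all
      show "0 \<le> kernel pL f i j \<and> Min (range (\<lambda>s. pH s / pL s)) * kernel pL f i j \<le> kernel pH f i j
          \<and> kernel pH f i j \<le> Max (range (\<lambda>s. pH s / pL s)) * kernel pL f i j"
        if "i \<in> {1<..<m}" and "j \<in> {1..m}" for i j
        using that L.kernel_nonneg transition_nonneg
          kernel_likelihood_ratio_bounds[OF signal_dist_L, of f i j pH] by simp
    qed (use H.one_less_m likelihood_ratio_bounds[OF signal_dist_H signal_dist_L distinct_signals]
           H.init_nonneg H.init_sum H.occupation_nonneg L.occupation_nonneg occupation_same_support
           H.occupation_cut_balance L.occupation_cut_balance in auto)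
    have "ratio.\<gamma> = gamma pH pL" by (simp add: ratio.\<gamma>_def gamma_def)
    thus ?thesis using ratio.ratio_bound unfolding occupation_ends by auto
  qed
qed

end

theorem lemma4:
  fixes piH piL :: "'s::finite \<Rightarrow> real"
    and m :: nat
    and f :: "nat \<Rightarrow> 's \<Rightarrow> nat \<Rightarrow> real"
    and g a :: "nat \<Rightarrow> real"
  assumes "is_signal_dist piH" and "is_signal_dist piL" and "piH \<noteq> piL"
    and "valid_protocol m f g a"
    and "parsimonious m piH f a"
    and "absorbing m piH f 1" and "a 1 = 0"
    and "absorbing m piH f m" and "a m = 1"
  shows "absorb_prob m piH f g m * absorb_prob m piL f g 1
           \<le> gamma piH piL ^ (m - 2) * absorb_prob m piH f g 1 * absorb_prob m piL f g m \<and>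
         (m \<ge> 4 \<longrightarrow> absorb_prob m piH f g 1 \<noteq> 0 \<longrightarrow> absorb_prob m piH f g m \<noteq> 0 \<longrightarrow>
         absorb_prob m piL f g 1 \<noteq> 0 \<longrightarrow> absorb_prob m piL f g m \<noteq> 0 \<longrightarrow>
         absorb_prob m piH f g m * absorb_prob m piL f g 1
           < gamma piH piL ^ (m - 2) * absorb_prob m piH f g 1 * absorb_prob m piL f g m)"
proof -
  have "1 \<noteq> m" using \<open>a 1 = 0\<close> \<open>a m = 1\<close> by auto
  have "absorbing_chain m p f g" if "is_signal_dist p" for p
    using parsimonious_absorbing_chain[OF assms(1) that assms(4-6,8) \<open>1 \<noteq> m\<close>] .
  moreover have "\<And>i s j. i \<in> {1..m} \<Longrightarrow> j \<in> {1..m} \<Longrightarrow> 0 \<le> f i s j"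
    using assms(4) by (simp add: valid_protocol_def)
  ultimately interpret signal_comparison m piH piL f g
    using assms(1-3) by (simp add: signal_comparison_def signal_comparison_axioms_def)
  show ?thesis by (rule absorb_prob_ratio_bound)
qed

end
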